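(* For any metric space $(X,d)$, the collection $\{\vec B_r(S): S\in\mathrm{K}(X),\ r\ge0\}$ is a basis for a topology on $\mathrm{K}(X)$.
   Context: $\mathrm{K}(X)$ is the set of non-empty $d$-compact subsets of $X$. For $S,S'\in\mathrm{K}(X)$, the one-sided Hausdorff distance is $\vec d(S,S'):=\max_{x\in S}\min_{x'\in S'}d(x,x')$, and $\vec B_r(S):=\{S'\in\mathrm{K}(X):\vec d(S',S)<r\}$. *)

theory Defs
  imports "HOL-Analysis.Analysis"
begin

text \<open>K(X): the non-empty compact subsets of the metric space X (here the whole type).\<close>
definition Kset :: "('a::metric_space) set set" where
  "Kset = {S. S \<noteq> {} \<and> compact S}"

text \<open>One-sided Hausdorff distance: max over x in S of min over x' in S' of d(x,x').
  For non-empty compact S, S' the SUP/INF are attained, i.e. they are max/min.\<close>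
definition hdist_dir :: "('a::metric_space) set \<Rightarrow> 'a set \<Rightarrow> real" where
  "hdist_dir S S' = (SUP x\<in>S. INF x'\<in>S'. dist x x')"

definition Bvec :: "real \<Rightarrow> ('a::metric_space) set \<Rightarrow> 'a set set" where
  "Bvec r S = {S' \<in> Kset. hdist_dir S' S < r}"

end

theory Submission
  imports Defs
begin

text \<open>The one-sided distance vanishes on the diagonal and satisfies the triangle inequality, so
  every member \<open>T\<close> of a ball \<open>B\<^sub>r(S)\<close> is the centre of the smaller ball \<open>B\<^sub>e(T) \<subseteq> B\<^sub>r(S)\<close>,
  \<open>e = r - d(T,S)\<close>. Hence every point of the intersection of two balls is the centre of a ball
  inside the intersection, and the balls cover \<open>K(X)\<close>: these are the two axioms of a basis.\<close>

lemma istopology_arbitrary_union_of_basis: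
  assumes "\<And>U V x. U \<in> \<B> \<Longrightarrow> V \<in> \<B> \<Longrightarrow> x \<in> U \<inter> V \<Longrightarrow> \<exists>W\<in>\<B>. x \<in> W \<and> W \<subseteq> U \<inter> V"
  shows "istopology (arbitrary union_of (\<lambda>U. U \<in> \<B>))"
  unfolding istopology_base_eq
proof (intro allI impI)
  fix U V assume "U \<in> \<B> \<and> V \<in> \<B>"
  then have "U \<inter> V = \<Union>{W \<in> \<B>. W \<subseteq> U \<inter> V}"
    using assms by blast
  then show "(arbitrary union_of (\<lambda>U. U \<in> \<B>)) (U \<inter> V)"
    unfolding union_of_def arbitrary_def by (intro exI[of _ "{W \<in> \<B>. W \<subseteq> U \<inter> V}"]) auto
qed

lemma topology_with_basis_exists:
  assumes "\<And>U V x. U \<in> \<B> \<Longrightarrow> V \<in> \<B> \<Longrightarrow> x \<in> U \<inter> V \<Longrightarrow> \<exists>W\<in>\<B>. x \<in> W \<and> W \<subseteq> U \<inter> V"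
  shows "\<exists>T. topspace T = \<Union>\<B> \<and> (\<forall>U. openin T U \<longleftrightarrow> (\<exists>\<U>. \<U> \<subseteq> \<B> \<and> U = \<Union>\<U>))"
proof -
  define T where "T = topology (arbitrary union_of (\<lambda>U. U \<in> \<B>))"
  have "openin T = arbitrary union_of (\<lambda>U. U \<in> \<B>)"
    unfolding T_def using istopology_arbitrary_union_of_basis[OF assms] by (rule topology_inverse')
  then have openin_T: "openin T U \<longleftrightarrow> (\<exists>\<U>. \<U> \<subseteq> \<B> \<and> U = \<Union>\<U>)" for U
    unfolding union_of_def arbitrary_def by (simp add: subset_eq eq_commute)
  have "topspace T = \<Union>\<B>"
  proof
    show "topspace T \<subseteq> \<Union>\<B>"
      unfolding topspace_def openin_T by blast
    have "openin T W" if "W \<in> \<B>" for W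
      unfolding openin_T using that by (intro exI[of _ "{W}"]) simp
    then show "\<Union>\<B> \<subseteq> topspace T"
      using openin_subset by blast
  qed
  with openin_T show ?thesis by blast
qed

lemma hdist_dir_eq_SUP_infdist: "S' \<noteq> {} \<Longrightarrow> hdist_dir S S' = (SUP x\<in>S. infdist x S')"
  unfolding hdist_dir_def infdist_def by simp

lemma infdist_le_hdist_dir:
  assumes "compact S" "S' \<noteq> {}" "x \<in> S"
  shows "infdist x S' \<le> hdist_dir S S'"
proof -
  have "bdd_above ((\<lambda>x. infdist x S') ` S)"
    by (intro bounded_imp_bdd_above compact_imp_bounded compact_continuous_image
        continuous_on_infdist continuous_on_id assms(1))
  then show ?thesis
    unfolding hdist_dir_eq_SUP_infdist[OF assms(2)] using assms(3) by (rule cSUP_upper2) simp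
qed

lemma hdist_dir_self: "S \<noteq> {} \<Longrightarrow> hdist_dir S S = 0"
  unfolding hdist_dir_eq_SUP_infdist by simp

lemma hdist_dir_triangle:
  assumes "compact A" "A \<noteq> {}" "compact B" "B \<noteq> {}" "C \<noteq> {}"
  shows "hdist_dir A C \<le> hdist_dir A B + hdist_dir B C"
  unfolding hdist_dir_eq_SUP_infdist[OF assms(5), of A]
proof (rule cSUP_least[OF assms(2)])
  fix x assume "x \<in> A"
  have "infdist x C - hdist_dir B C \<le> dist x b" if "b \<in> B" for b
    using infdist_triangle[of x C b] infdist_le_hdist_dir[OF assms(3,5) that] by simp
  then have "infdist x C - hdist_dir B C \<le> infdist x B"
    unfolding infdist_def using assms(4) by (simp add: cINF_greatest)
  moreover have "infdist x B \<le> hdist_dir A B"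
    using infdist_le_hdist_dir[OF assms(1,4) \<open>x \<in> A\<close>] .
  ultimately show "infdist x C \<le> hdist_dir A B + hdist_dir B C" by simp
qed

lemma center_mem_Bvec: "S \<in> Kset \<Longrightarrow> 0 < r \<Longrightarrow> S \<in> Bvec r S"
  unfolding Bvec_def Kset_def by (simp add: hdist_dir_self)

lemma Bvec_subset_Bvec:
  assumes "T \<in> Kset" "S \<in> Kset" "hdist_dir T S + e \<le> r"
  shows "Bvec e T \<subseteq> Bvec r S"
proof
  fix R assume "R \<in> Bvec e T"
  then have "R \<in> Kset" "hdist_dir R T < e"
    unfolding Bvec_def by auto
  moreover have "hdist_dir R S \<le> hdist_dir R T + hdist_dir T S"
    using \<open>R \<in> Kset\<close> assms(1,2) unfolding Kset_def by (simp add: hdist_dir_triangle)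
  ultimately show "R \<in> Bvec r S"
    using assms(3) unfolding Bvec_def by simp
qed

lemma Bvec_Int_contains_Bvec:
  assumes "S\<^sub>1 \<in> Kset" "S\<^sub>2 \<in> Kset" "T \<in> Bvec r\<^sub>1 S\<^sub>1 \<inter> Bvec r\<^sub>2 S\<^sub>2"
  shows "\<exists>e>0. Bvec e T \<subseteq> Bvec r\<^sub>1 S\<^sub>1 \<inter> Bvec r\<^sub>2 S\<^sub>2"
proof -
  have T: "T \<in> Kset" "hdist_dir T S\<^sub>1 < r\<^sub>1" "hdist_dir T S\<^sub>2 < r\<^sub>2"
    using assms(3) unfolding Bvec_def by auto
  define e where "e = min (r\<^sub>1 - hdist_dir T S\<^sub>1) (r\<^sub>2 - hdist_dir T S\<^sub>2)"
  have "Bvec e T \<subseteq> Bvec r\<^sub>1 S\<^sub>1"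
    by (rule Bvec_subset_Bvec[OF T(1) assms(1)]) (simp add: e_def)
  moreover have "Bvec e T \<subseteq> Bvec r\<^sub>2 S\<^sub>2"
    by (rule Bvec_subset_Bvec[OF T(1) assms(2)]) (simp add: e_def)
  moreover have "e > 0"
    using T unfolding e_def by simp
  ultimately show ?thesis by blast
qed

definition Bvecs :: "('a::metric_space) set set set" where
  "Bvecs = {Bvec r S | S r. S \<in> Kset \<and> r \<ge> 0}"

lemma Bvec_in_Bvecs: "S \<in> Kset \<Longrightarrow> 0 \<le> r \<Longrightarrow> Bvec r S \<in> Bvecs"
  unfolding Bvecs_def by blast

lemma Bvecs_Int_basis:
  assumes "U \<in> Bvecs" "V \<in> Bvecs" "T \<in> U \<inter> V"
  shows "\<exists>W\<in>Bvecs. T \<in> W \<and> W \<subseteq> U \<inter> V"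
proof -
  obtain S\<^sub>1 r\<^sub>1 S\<^sub>2 r\<^sub>2 where U: "U = Bvec r\<^sub>1 S\<^sub>1" "S\<^sub>1 \<in> Kset" and "V = Bvec r\<^sub>2 S\<^sub>2" "S\<^sub>2 \<in> Kset"
    using assms(1,2) unfolding Bvecs_def by blast
  then obtain e where "e > 0" and e: "Bvec e T \<subseteq> U \<inter> V"
    using Bvec_Int_contains_Bvec assms(3) by blast
  have "T \<in> Kset"
    using assms(3) U(1) unfolding Bvec_def by auto
  then have "T \<in> Bvec e T" "Bvec e T \<in> Bvecs"
    using \<open>e > 0\<close> by (simp_all add: center_mem_Bvec Bvec_in_Bvecs)
  with e show ?thesis by blast
qed

lemma Union_Bvecs: "\<Union>Bvecs = Kset"
proof
  show "\<Union>Bvecs \<subseteq> Kset"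
    unfolding Bvecs_def Bvec_def by auto
  have "S \<in> Bvec 1 S" "Bvec 1 S \<in> Bvecs" if "S \<in> Kset" for S
    using that by (simp_all add: center_mem_Bvec Bvec_in_Bvecs)
  then show "Kset \<subseteq> \<Union>Bvecs" by blast
qed

theorem lemma3p12:
  shows "\<exists>T :: ('a::metric_space) set topology.
           topspace T = Kset \<and>
           (\<forall>U. openin T U \<longleftrightarrow>
                (\<exists>\<U>. \<U> \<subseteq> {Bvec r S | S r. S \<in> Kset \<and> r \<ge> 0} \<and> U = \<Union>\<U>))"
  using topology_with_basis_exists[OF Bvecs_Int_basis]
  unfolding Union_Bvecs unfolding Bvecs_def .

end
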